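(* Let $\Phi:\mathbf D\to\mathbf C$, $\Psi:\mathbf C\to\mathbf D$ (with homotopy $h$) be a deformation retract of finite-type chain complexes of real inner product spaces, and let $\mathcal M$ be its Morsification, with base $I^{\mathcal M}$ of $\mathbf C$ and set of critical cells $\mathcal M^0$. Then $$\mathrm{id}_{\mathbf C}-\Phi\Psi=\sum_{\alpha\in I^{\mathcal M}\setminus\mathcal M^0} i_\alpha\circ\pi_\alpha,$$ where $i_\alpha:C_\alpha\to\mathbf C$ is the inclusion of the summand and $\pi_\alpha:\mathbf C\to C_\alpha$ the projection along the other summands of the decomposition $\mathbf C_n=\bigoplus_{\alpha\in I^{\mathcal M}_n}C_\alpha$.
   Context: Deformation retract: chain maps with $\Psi\Phi=\mathrm{id}_{\mathbf D}$ and $\partial h+h\partial=\mathrm{id}_{\mathbf C}-\Phi\Psi$. One has $\mathbf C=\operatorname{Ker}\Psi\oplus\operatorname{Im}\Phi$ as chain complexes. The Morsification $\mathcal M$: give the subcomplex $\operatorname{Ker}\Psi$ (boundary $\partial'$) the restricted inner product and choose a Hodge basis of it, i.e. in each degree, via singular value decompositions, orthonormal bases $\mathcal R_+(\partial'_m)$ of $\operatorname{Im}\partial_m'^\dagger$ and $\mathcal L_+(\partial'_m)$ of $\operatorname{Im}\partial'_m$ with a bijection $v\mapsto w$, $\partial'_mv=\sigma w$, $\sigma>0$, together with a basis of $\operatorname{Ker}(\partial_m'^\dagger\partial'_m+\partial'_{m+1}\partial_{m+1}'^\dagger)$. The base $I^{\mathcal M}$ of $\mathbf C$ consists of the one-dimensional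 summands spanned by these vectors together with a decomposition of each $(\operatorname{Im}\Phi)_n$ into summands; the matching $\mathcal M$ consists of the edges $v\to w$ above, and the critical cells $\mathcal M^0$ are the unmatched ones. *)

theory Defs
  imports "HOL-Analysis.Analysis"
begin

text \<open>A graded real inner product space is modelled as a family of subspaces C n
(n an integer degree) of an ambient real inner product space; each C n carries the
restricted inner product.  Maps are indexed by the degree of their source.\<close>

definition lin_on :: "'a::real_vector set \<Rightarrow> ('a \<Rightarrow> 'b::real_vector) \<Rightarrow> bool" where
  "lin_on A f \<longleftrightarrow> (\<forall>x\<in>A. \<forall>y\<in>A. f (x + y) = f x + f y) \<and> (\<forall>c. \<forall>x\<in>A. f (c *\<^sub>R x) = c *\<^sub>R f x)"

definition fin_dim_subspace :: "'a::real_vector set \<Rightarrow> bool" where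
  "fin_dim_subspace A \<longleftrightarrow> (\<exists>B. finite B \<and> A = span B)"

definition chain_complex :: "(int \<Rightarrow> 'a::real_inner set) \<Rightarrow> (int \<Rightarrow> 'a \<Rightarrow> 'a) \<Rightarrow> bool" where
  "chain_complex C d \<longleftrightarrow>
     (\<forall>n. fin_dim_subspace (C n) \<and> lin_on (C n) (d n) \<and> d n ` C n \<subseteq> C (n - 1)
        \<and> (\<forall>x\<in>C n. d (n - 1) (d n x) = 0))"

definition chain_map :: "(int \<Rightarrow> 'a::real_vector set) \<Rightarrow> (int \<Rightarrow> 'a \<Rightarrow> 'a) \<Rightarrow>
     (int \<Rightarrow> 'b::real_vector set) \<Rightarrow> (int \<Rightarrow> 'b \<Rightarrow> 'b) \<Rightarrow> (int \<Rightarrow> 'a \<Rightarrow> 'b) \<Rightarrow> bool" where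
  "chain_map A dA B dB f \<longleftrightarrow>
     (\<forall>n. lin_on (A n) (f n) \<and> f n ` A n \<subseteq> B n \<and> (\<forall>x\<in>A n. dB n (f n x) = f (n - 1) (dA n x)))"

definition deformation_retract where
  "deformation_retract C dC D dD Phi Psi h \<longleftrightarrow>
     chain_complex C dC \<and> chain_complex D dD \<and>
     chain_map D dD C dC Phi \<and> chain_map C dC D dD Psi \<and>
     (\<forall>n. lin_on (C n) (h n) \<and> h n ` C n \<subseteq> C (n + 1)) \<and>
     (\<forall>n. \<forall>y\<in>D n. Psi n (Phi n y) = y) \<and>
     (\<forall>n. \<forall>x\<in>C n. dC (n + 1) (h n x) + h (n - 1) (dC n x) = x - Phi n (Psi n x))"

definition dagger :: "'a::real_inner set \<Rightarrow> ('a \<Rightarrow> 'a) \<Rightarrow> 'a \<Rightarrow> 'a" where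
  "dagger A f y = (THE z. z \<in> A \<and> (\<forall>x\<in>A. inner (f x) y = inner x z))"

definition orthonormal_basis_of :: "'a::real_inner set \<Rightarrow> 'a set \<Rightarrow> bool" where
  "orthonormal_basis_of B W \<longleftrightarrow> B \<subseteq> W \<and> independent B \<and> span B = W
      \<and> (\<forall>v\<in>B. norm v = 1) \<and> pairwise orthogonal B"

definition basis_of :: "'a::real_vector set \<Rightarrow> 'a set \<Rightarrow> bool" where
  "basis_of B W \<longleftrightarrow> B \<subseteq> W \<and> independent B \<and> span B = W"

definition direct_sum_decomp :: "'c set \<Rightarrow> ('c \<Rightarrow> 'a::real_vector set) \<Rightarrow> 'a set \<Rightarrow> bool" where
  "direct_sum_decomp I S W \<longleftrightarrow> finite I \<and> (\<forall>\<alpha>\<in>I. subspace (S \<alpha>) \<and> S \<alpha> \<subseteq> W) \<and>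
     (\<forall>x\<in>W. \<exists>!f. (\<forall>\<alpha>\<in>I. f \<alpha> \<in> S \<alpha>) \<and> (\<forall>\<alpha>. \<alpha> \<notin> I \<longrightarrow> f \<alpha> = 0) \<and> x = (\<Sum>\<alpha>\<in>I. f \<alpha>))"

text \<open>i_\<alpha> \<circ> \<pi>_\<alpha>: the component in S \<alpha> of x along the other summands.\<close>
definition proj_along :: "'c set \<Rightarrow> ('c \<Rightarrow> 'a::real_vector set) \<Rightarrow> 'c \<Rightarrow> 'a \<Rightarrow> 'a" where
  "proj_along I S \<alpha> x = (THE y. \<exists>f. (\<forall>\<beta>\<in>I. f \<beta> \<in> S \<beta>) \<and> (\<forall>\<beta>. \<beta> \<notin> I \<longrightarrow> f \<beta> = 0)
        \<and> x = (\<Sum>\<beta>\<in>I. f \<beta>) \<and> y = f \<alpha>)"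

text \<open>Cells: one-dimensional summands spanned by Hodge basis vectors of Ker \<Psi>,
and summands of the decomposition of Im \<Phi> (indexed by an arbitrary type 'i).\<close>
datatype ('v, 'i) mcell = Vec 'v | Smd 'i

definition kerPsi :: "(int \<Rightarrow> 'a set) \<Rightarrow> (int \<Rightarrow> 'a \<Rightarrow> 'b::zero) \<Rightarrow> int \<Rightarrow> 'a set" where
  "kerPsi C Psi n = {x \<in> C n. Psi n x = 0}"

text \<open>\<partial>'_m = restriction of \<partial>_m to K_m, and its adjoint \<partial>'_m^\<dagger> : K_(m-1) \<rightarrow> K_m.\<close>
definition harmonic_space where
  "harmonic_space K d m = {x \<in> K m.
      dagger (K m) (d m) (d m x) + d (m + 1) (dagger (K (m + 1)) (d (m + 1)) x) = 0}"

text \<open>Morsification data: R m = R_+(\<partial>'_m) \<subseteq> K_m, L m = L_+(\<partial>'_m) \<subseteq> K_(m-1),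
match m : R m \<rightarrow> L m the SVD bijection, H m a basis of the harmonic space in degree m,
and P n j (j \<in> J n) a direct sum decomposition of (Im \<Phi>)_n.\<close>
definition is_morsification where
  "is_morsification C dC D Phi Psi R L match H J P \<longleftrightarrow>
     (let K = kerPsi C Psi in
      (\<forall>m. orthonormal_basis_of (R m) (dagger (K m) (dC m) ` K (m - 1))) \<and>
      (\<forall>m. orthonormal_basis_of (L m) (dC m ` K m)) \<and>
      (\<forall>m. bij_betw (match m) (R m) (L m)) \<and>
      (\<forall>m. \<forall>v\<in>R m. \<exists>\<sigma>>0. dC m v = \<sigma> *\<^sub>R match m v) \<and>
      (\<forall>m. basis_of (H m) (harmonic_space K dC m)) \<and>
      (\<forall>n. direct_sum_decomp (J n) (P n) (Phi n ` D n)))"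

text \<open>The base I^M in degree n, the summand attached to each cell, the matching and
the critical cells.\<close>
definition morse_cells where
  "morse_cells R L H J n = Vec ` (R n \<union> L (n + 1) \<union> H n) \<union> Smd ` J n"

fun morse_summand :: "(int \<Rightarrow> 'i \<Rightarrow> 'v::real_vector set) \<Rightarrow> int \<Rightarrow> ('v, 'i) mcell \<Rightarrow> 'v set" where
  "morse_summand P n (Vec v) = span {v}"
| "morse_summand P n (Smd j) = P n j"

definition morse_matching where
  "morse_matching R match = {((n, Vec v), (n - 1, Vec (match n v))) | n v. v \<in> R n}"

definition critical_cells where
  "critical_cells R L H J match n = {\<alpha> \<in> morse_cells R L H J n.
      \<forall>e\<in>morse_matching R match. fst e \<noteq> (n, \<alpha>) \<and> snd e \<noteq> (n, \<alpha>)}"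

end

theory Submission
  imports Defs
begin

text \<open>
  The kernel K of Psi is a subcomplex of C, and it is acyclic: a cycle z of K satisfies
  z = d (h z) by the homotopy formula, and replacing h z by its component
  h z - Phi (Psi (h z)) in K exhibits z as a boundary in K. Hence K has no harmonic part,
  so in degree n the orthonormal vectors of R_+(d'_n) and L_+(d'_(n+1)), which are orthogonal
  to each other because d d = 0, span K_n; these are exactly the matched cells of degree n.
  As C_n is the direct sum of K_n and Im Phi_n, with K-component x - Phi (Psi x), the projections
  of x onto the matched cells add up to x - Phi (Psi x).
\<close>

lemma lin_on_zero:
  assumes "subspace A" "lin_on A f"
  shows "f 0 = 0"
  using assms unfolding lin_on_def by (metis scale_zero_left subspace_0)

lemma lin_on_diff:
  assumes "subspace A" "lin_on A f" "x \<in> A" "y \<in> A"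
  shows "f (x - y) = f x - f y"
proof -
  have "f (x - y) + f y = f x"
    using assms unfolding lin_on_def by (metis diff_add_cancel subspace_diff)
  then show ?thesis by (simp add: eq_diff_eq)
qed

lemma lin_on_sum:
  assumes "subspace A" "lin_on A f" "finite I" "\<And>i. i \<in> I \<Longrightarrow> g i \<in> A"
  shows "f (\<Sum>i\<in>I. g i) = (\<Sum>i\<in>I. f (g i))"
  using assms(3,4)
proof (induction I rule: finite_induct)
  case empty
  show ?case using lin_on_zero[OF assms(1,2)] by simp
next
  case (insert i I)
  then have "(\<Sum>i\<in>I. g i) \<in> A"
    using assms(1) by (simp add: subspace_sum)
  with insert assms(2) show ?case
    unfolding lin_on_def by simp
qed

lemma lin_on_subset: "lin_on A f \<Longrightarrow> B \<subseteq> A \<Longrightarrow> lin_on B f"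
  unfolding lin_on_def by blast

lemma subspace_image_lin_on:
  assumes "subspace A" "lin_on A f"
  shows "subspace (f ` A)"
  unfolding subspace_def
proof (intro conjI ballI allI)
  show "0 \<in> f ` A"
    using lin_on_zero[OF assms] assms(1) subspace_0 by (metis image_eqI)
next
  fix u v assume "u \<in> f ` A" "v \<in> f ` A"
  then obtain a b where "a \<in> A" "b \<in> A" "u = f a" "v = f b" by blast
  then show "u + v \<in> f ` A"
    using assms unfolding lin_on_def by (metis image_eqI subspace_add)
next
  fix c u assume "u \<in> f ` A"
  then obtain a where "a \<in> A" "u = f a" by blast
  then show "c *\<^sub>R u \<in> f ` A"
    using assms unfolding lin_on_def by (metis image_eqI subspace_mul)
qed

lemma subspace_kernel_lin_on:
  assumes "subspace A" "lin_on A f"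
  shows "subspace {x \<in> A. f x = 0}"
  using assms lin_on_zero[OF assms] unfolding subspace_def lin_on_def by auto

lemma fin_dim_subspace_imp_subspace: "fin_dim_subspace A \<Longrightarrow> subspace A"
  unfolding fin_dim_subspace_def by auto

lemma fin_dim_subspace_subset:
  assumes "fin_dim_subspace A" "subspace S" "S \<subseteq> A"
  shows "fin_dim_subspace S"
proof -
  obtain B where B: "finite B" "A = span B"
    using assms(1) unfolding fin_dim_subspace_def by blast
  obtain B' where B': "B' \<subseteq> S" "independent B'" "S \<subseteq> span B'"
    by (rule maximal_independent_subset)
  have "finite B'"
    using independent_span_bound[OF B(1) B'(2)] B'(1) assms(3) B(2) by blast
  with span_subspace[OF B'(1,3) assms(2)] show ?thesis
    unfolding fin_dim_subspace_def by blast
qed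

definition orthonormal :: "'a::real_inner set \<Rightarrow> bool" where
  "orthonormal U \<longleftrightarrow> (\<forall>u\<in>U. norm u = 1) \<and> pairwise orthogonal U"

lemma orthonormal_inner:
  assumes "orthonormal U" "u \<in> U" "w \<in> U"
  shows "u \<bullet> w = (if u = w then 1 else 0)"
  using assms unfolding orthonormal_def pairwise_def orthogonal_def by (auto simp: norm_eq_1)

lemma orthonormal_independent: "orthonormal U \<Longrightarrow> independent U"
  unfolding orthonormal_def by (metis norm_zero pairwise_orthogonal_independent zero_neq_one)

lemma orthonormal_finite:
  assumes "orthonormal U" "U \<subseteq> A" "fin_dim_subspace A"
  shows "finite U"
  using assms independent_span_bound orthonormal_independent unfolding fin_dim_subspace_def by metis

lemma orthonormal_insert:
  assumes "orthonormal U" "norm c = 1" "\<And>u. u \<in> U \<Longrightarrow> c \<bullet> u = 0"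
  shows "orthonormal (insert c U)"
  using assms unfolding orthonormal_def
  by (auto simp: pairwise_insert orthogonal_def inner_commute)

lemma inner_sum_orthonormal:
  assumes "orthonormal U" "finite U" "w \<in> U"
  shows "(\<Sum>u\<in>U. c u *\<^sub>R u) \<bullet> w = c w"
proof -
  have "(\<Sum>u\<in>U. c u *\<^sub>R u) \<bullet> w = (\<Sum>u\<in>U. if u = w then c u else 0)"
    unfolding inner_sum_left using assms(1,3) by (intro sum.cong) (auto simp: orthonormal_inner)
  then show ?thesis
    using assms(2,3) by (simp add: sum.delta')
qed

lemma orthogonal_span_residual:
  assumes "orthonormal U" "finite U" "w \<in> span U"
  shows "(x - (\<Sum>u\<in>U. (x \<bullet> u) *\<^sub>R u)) \<bullet> w = 0"
proof -
  have "orthogonal (x - (\<Sum>u\<in>U. (x \<bullet> u) *\<^sub>R u)) w"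
  proof (rule orthogonal_to_span[OF assms(3)])
    fix y assume "y \<in> U"
    then show "orthogonal (x - (\<Sum>u\<in>U. (x \<bullet> u) *\<^sub>R u)) y"
      using inner_sum_orthonormal[OF assms(1,2)] by (simp add: orthogonal_def inner_diff_left)
  qed
  then show ?thesis
    unfolding orthogonal_def .
qed

lemma orthonormal_expansion:
  assumes "orthonormal U" "finite U" "x \<in> span U"
  shows "x = (\<Sum>u\<in>U. (x \<bullet> u) *\<^sub>R u)"
proof -
  let ?z = "x - (\<Sum>u\<in>U. (x \<bullet> u) *\<^sub>R u)"
  have "?z \<in> span U"
    using assms(3) by (simp add: span_diff span_sum span_mul span_base)
  then have "?z \<bullet> ?z = 0"
    using orthogonal_span_residual[OF assms(1,2)] by blast
  then show ?thesis by simp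
qed

lemma span_insert_scaleR:
  assumes "c \<noteq> 0"
  shows "span (insert (c *\<^sub>R a) S) = span (insert a S)"
proof -
  have "x - k *\<^sub>R (c *\<^sub>R a) \<in> span S \<longleftrightarrow> x - (k * c) *\<^sub>R a \<in> span S" for x k
    by simp
  then show ?thesis
    using assms by (auto simp: span_breakdown_eq) (metis nonzero_eq_divide_eq)
qed

lemma orthonormal_spanning_set_exists:
  assumes "finite B"
  shows "\<exists>U. finite U \<and> orthonormal U \<and> span U = span B"
  using assms
proof (induction B rule: finite_induct)
  case empty
  show ?case
    by (rule exI[of _ "{}"]) (simp add: orthonormal_def)
next
  case (insert b B)
  then obtain U where U: "finite U" "orthonormal U" "span U = span B"
    by blast
  define c where "c = b - (\<Sum>u\<in>U. (b \<bullet> u) *\<^sub>R u)"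
  have "b - c \<in> span U"
    unfolding c_def by (simp add: span_sum span_mul span_base)
  then have span_c: "span (insert c U) = span (insert b B)"
    using U(3) eq_span_insert_eq[of b c U] by (simp add: span_insert)
  show ?case
  proof (cases "c = 0")
    case True
    then show ?thesis
      using U span_c by (metis span_insert_0)
  next
    case False
    let ?c' = "(1 / norm c) *\<^sub>R c"
    have "orthonormal (insert ?c' U)"
      using U(2) False orthogonal_span_residual[OF U(2,1) span_base, of _ b]
      by (intro orthonormal_insert) (simp_all add: c_def)
    moreover have "span (insert ?c' U) = span (insert b B)"
      using False span_c by (simp add: span_insert_scaleR)
    ultimately show ?thesis
      using U(1) by (intro exI[of _ "insert ?c' U"]) simp
  qed
qed

lemma orthonormal_basis_exists:
  assumes "fin_dim_subspace A"
  obtains U where "finite U" "orthonormal U" "span U = A"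
  using assms orthonormal_spanning_set_exists unfolding fin_dim_subspace_def by metis

lemma orthonormal_Un:
  assumes "orthonormal A" "orthonormal B" "\<And>a b. a \<in> A \<Longrightarrow> b \<in> B \<Longrightarrow> a \<bullet> b = 0"
  shows "orthonormal (A \<union> B)"
  using assms unfolding orthonormal_def pairwise_def orthogonal_def
  by (metis Un_iff inner_commute)

lemma orthonormal_basis_ofD:
  assumes "orthonormal_basis_of B W"
  shows "orthonormal B" "B \<subseteq> W" "span B = W"
  using assms unfolding orthonormal_basis_of_def orthonormal_def by auto

lemma adjoint_exists:
  assumes "fin_dim_subspace A" "lin_on A f"
  shows "\<exists>z\<in>A. \<forall>x\<in>A. f x \<bullet> y = x \<bullet> z"
proof -
  obtain U where U: "finite U" "orthonormal U" "span U = A"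
    using orthonormal_basis_exists[OF assms(1)] .
  have A: "subspace A"
    using assms(1) by (rule fin_dim_subspace_imp_subspace)
  define z where "z = (\<Sum>u\<in>U. (f u \<bullet> y) *\<^sub>R u)"
  have "z \<in> A"
    unfolding z_def U(3)[symmetric] by (simp add: span_sum span_mul span_base)
  moreover have "f x \<bullet> y = x \<bullet> z" if "x \<in> A" for x
  proof -
    have UA: "u \<in> U \<Longrightarrow> u \<in> A" for u
      using U(3) span_base by blast
    have "f x = f (\<Sum>u\<in>U. (x \<bullet> u) *\<^sub>R u)"
      using orthonormal_expansion[OF U(2,1)] that U(3) by auto
    also have "\<dots> = (\<Sum>u\<in>U. (x \<bullet> u) *\<^sub>R f u)"
      using lin_on_sum[OF A assms(2) U(1)] A UA assms(2)
      by (simp add: subspace_mul lin_on_def)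
    finally show ?thesis
      unfolding z_def by (simp add: inner_sum_left inner_sum_right mult.commute)
  qed
  ultimately show ?thesis by blast
qed

lemma
  assumes "fin_dim_subspace A" "lin_on A f"
  shows dagger_mem: "dagger A f y \<in> A"
    and inner_dagger: "x \<in> A \<Longrightarrow> f x \<bullet> y = x \<bullet> dagger A f y"
proof -
  obtain z where z: "z \<in> A" "\<forall>x\<in>A. f x \<bullet> y = x \<bullet> z"
    using adjoint_exists[OF assms] by blast
  have "dagger A f y = z"
    unfolding dagger_def
  proof (rule the_equality)
    fix z' assume z': "z' \<in> A \<and> (\<forall>x\<in>A. f x \<bullet> y = x \<bullet> z')"
    then have "z' - z \<in> A"
      using z(1) assms(1) fin_dim_subspace_imp_subspace subspace_diff by blast
    then have "(z' - z) \<bullet> (z' - z) = 0"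
      using z z' by (simp add: inner_diff_right)
    then show "z' = z" by simp
  qed (use z in blast)
  with z show "dagger A f y \<in> A" "x \<in> A \<Longrightarrow> f x \<bullet> y = x \<bullet> dagger A f y"
    by auto
qed

definition acyclic_complex :: "(int \<Rightarrow> 'a::real_vector set) \<Rightarrow> (int \<Rightarrow> 'a \<Rightarrow> 'a) \<Rightarrow> bool" where
  "acyclic_complex K d \<longleftrightarrow> (\<forall>m. \<forall>z\<in>K m. d m z = 0 \<longrightarrow> (\<exists>w\<in>K (m + 1). d (m + 1) w = z))"

lemma
  assumes "chain_complex K d"
  shows chain_complex_fin_dim: "fin_dim_subspace (K m)"
    and chain_complex_subspace: "subspace (K m)"
    and chain_complex_lin_on: "lin_on (K m) (d m)"
    and chain_complex_mem: "x \<in> K (m + 1) \<Longrightarrow> d (m + 1) x \<in> K m"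
    and chain_complex_d_d: "x \<in> K (m + 1) \<Longrightarrow> d m (d (m + 1) x) = 0"
  using assms fin_dim_subspace_imp_subspace unfolding chain_complex_def
  by (fastforce simp del: diff_add_cancel)+

lemma
  assumes "chain_complex K d"
  shows chain_complex_dagger_mem: "dagger (K m) (d m) y \<in> K m"
    and chain_complex_inner_dagger: "x \<in> K m \<Longrightarrow> d m x \<bullet> y = x \<bullet> dagger (K m) (d m) y"
  using dagger_mem inner_dagger chain_complex_fin_dim[OF assms] chain_complex_lin_on[OF assms]
  by blast+

lemma inner_dagger_image_d_image:
  assumes "chain_complex K d"
    and "r \<in> dagger (K m) (d m) ` K (m - 1)" "l \<in> d (m + 1) ` K (m + 1)"
  shows "r \<bullet> l = 0"
proof -
  obtain b where r: "r = dagger (K m) (d m) b"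
    using assms(2) by blast
  obtain a where a: "a \<in> K (m + 1)" "l = d (m + 1) a"
    using assms(3) by blast
  have "l \<bullet> r = d m l \<bullet> b"
    unfolding r using a chain_complex_mem[OF assms(1)] by (simp add: chain_complex_inner_dagger[OF assms(1)])
  also have "\<dots> = 0"
    using a chain_complex_d_d[OF assms(1)] by simp
  finally show ?thesis
    by (simp add: inner_commute)
qed

lemma harmonic_space_acyclic:
  assumes "chain_complex K d" "acyclic_complex K d"
  shows "harmonic_space K d m \<subseteq> {0}"
proof
  fix z assume "z \<in> harmonic_space K d m"
  then have z: "z \<in> K m"
    and harmonic: "dagger (K m) (d m) (d m z) + d (m + 1) (dagger (K (m + 1)) (d (m + 1)) z) = 0"
    unfolding harmonic_space_def by auto
  note dagger = chain_complex_dagger_mem[OF assms(1)] chain_complex_inner_dagger[OF assms(1)]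
  define b where "b = dagger (K (m + 1)) (d (m + 1)) z"
  have "d (m + 1) b \<bullet> z = b \<bullet> b"
    unfolding b_def using dagger by blast
  have "0 = z \<bullet> (dagger (K m) (d m) (d m z) + d (m + 1) b)"
    using harmonic unfolding b_def by simp
  also have "\<dots> = d m z \<bullet> d m z + b \<bullet> b"
    using z \<open>d (m + 1) b \<bullet> z = b \<bullet> b\<close> by (simp add: dagger inner_add_right inner_commute)
  finally have "d m z = 0" "b = 0"
    by (simp_all add: add_nonneg_eq_0_iff)
  then obtain w where w: "w \<in> K (m + 1)" "d (m + 1) w = z"
    using assms(2) z unfolding acyclic_complex_def by blast
  have "z \<bullet> z = w \<bullet> b"
    unfolding b_def using dagger w by metis
  with \<open>b = 0\<close> show "z \<in> {0}" by simp
qed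

lemma orthonormal_hodge_basis:
  assumes "chain_complex K d"
    and R: "orthonormal_basis_of R (dagger (K m) (d m) ` K (m - 1))"
    and L: "orthonormal_basis_of L (d (m + 1) ` K (m + 1))"
  shows "orthonormal (R \<union> L)" "R \<union> L \<subseteq> K m" "finite (R \<union> L)"
proof -
  show "orthonormal (R \<union> L)"
    using orthonormal_basis_ofD[OF R] orthonormal_basis_ofD[OF L] inner_dagger_image_d_image[OF assms(1)]
    by (intro orthonormal_Un) blast+
  show "R \<union> L \<subseteq> K m"
    using orthonormal_basis_ofD(2)[OF R] orthonormal_basis_ofD(2)[OF L]
      chain_complex_dagger_mem[OF assms(1)] chain_complex_mem[OF assms(1)]
    by blast
  then show "finite (R \<union> L)"
    using orthonormal_finite \<open>orthonormal (R \<union> L)\<close> chain_complex_fin_dim[OF assms(1)] by blast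
qed

lemma span_hodge_basis:
  assumes "chain_complex K d" "acyclic_complex K d"
    and R: "orthonormal_basis_of R (dagger (K m) (d m) ` K (m - 1))"
    and L: "orthonormal_basis_of L (d (m + 1) ` K (m + 1))"
  shows "span (R \<union> L) = K m"
proof
  note U = orthonormal_hodge_basis[OF assms(1) R L]
  show "span (R \<union> L) \<subseteq> K m"
    using U(2) chain_complex_subspace[OF assms(1)] by (rule span_minimal)
  show "K m \<subseteq> span (R \<union> L)"
  proof
    fix k assume k: "k \<in> K m"
    define y where "y = (\<Sum>u\<in>R \<union> L. (k \<bullet> u) *\<^sub>R u)"
    have y: "y \<in> span (R \<union> L)"
      unfolding y_def by (intro span_sum span_mul span_base)
    have residual: "(k - y) \<bullet> w = 0" if "w \<in> span (R \<union> L)" for w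
      unfolding y_def using orthogonal_span_residual[OF U(1,3) that] .
    have "k - y \<in> K m"
      using k y \<open>span (R \<union> L) \<subseteq> K m\<close> chain_complex_subspace[OF assms(1)] subspace_diff by blast
    have "d m (k - y) \<in> K (m - 1)"
      using chain_complex_mem[OF assms(1), of "k - y" "m - 1"] \<open>k - y \<in> K m\<close> by simp
    then have "dagger (K m) (d m) (d m (k - y)) \<in> span (R \<union> L)"
      using orthonormal_basis_ofD(3)[OF R] span_mono[of R "R \<union> L"] by blast
    then have "d m (k - y) \<bullet> d m (k - y) = 0"
      using residual \<open>k - y \<in> K m\<close> chain_complex_inner_dagger[OF assms(1)] by metis
    then have "d m (k - y) = 0"
      by simp
    then obtain w where "w \<in> K (m + 1)" "d (m + 1) w = k - y"
      using assms(2) \<open>k - y \<in> K m\<close> unfolding acyclic_complex_def by blast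
    then have "k - y \<in> span L"
      unfolding orthonormal_basis_ofD(3)[OF L] by (metis image_eqI)
    then have "k - y \<in> span (R \<union> L)"
      using span_mono[of L "R \<union> L"] by blast
    then have "(k - y) \<bullet> (k - y) = 0"
      by (rule residual)
    then have "k - y = 0"
      by simp
    with y show "k \<in> span (R \<union> L)" by simp
  qed
qed

definition independent_summands :: "'c set \<Rightarrow> ('c \<Rightarrow> 'a::real_vector set) \<Rightarrow> bool" where
  "independent_summands I S \<longleftrightarrow>
     (\<forall>d. (\<forall>\<beta>\<in>I. d \<beta> \<in> S \<beta>) \<and> (\<Sum>\<beta>\<in>I. d \<beta>) = 0 \<longrightarrow> (\<forall>\<beta>\<in>I. d \<beta> = 0))"

lemma independent_summands_if_direct_sum_decomp:
  assumes "direct_sum_decomp I S W" "subspace W"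
  shows "independent_summands I S"
  unfolding independent_summands_def
proof (intro allI impI ballI)
  fix d \<alpha> assume d: "(\<forall>\<beta>\<in>I. d \<beta> \<in> S \<beta>) \<and> (\<Sum>\<beta>\<in>I. d \<beta>) = 0" and "\<alpha> \<in> I"
  define decomposes_0 where "decomposes_0 f \<longleftrightarrow>
    (\<forall>\<beta>\<in>I. f \<beta> \<in> S \<beta>) \<and> (\<forall>\<beta>. \<beta> \<notin> I \<longrightarrow> f \<beta> = 0) \<and> 0 = (\<Sum>\<beta>\<in>I. f \<beta>)" for f
  define e where "e \<beta> = (if \<beta> \<in> I then d \<beta> else 0)" for \<beta>
  from assms(1) have "\<forall>x\<in>W. \<exists>!f. (\<forall>\<beta>\<in>I. f \<beta> \<in> S \<beta>) \<and> (\<forall>\<beta>. \<beta> \<notin> I \<longrightarrow> f \<beta> = 0) \<and> x = (\<Sum>\<beta>\<in>I. f \<beta>)"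
    unfolding direct_sum_decomp_def by (elim conjE)
  then have "\<exists>!f. decomposes_0 f"
    unfolding decomposes_0_def using subspace_0[OF assms(2)] by (rule bspec)
  moreover have "decomposes_0 e"
    using d unfolding decomposes_0_def e_def by simp
  moreover have "decomposes_0 (\<lambda>_. 0)"
    using assms(1) subspace_0 unfolding decomposes_0_def direct_sum_decomp_def by auto
  ultimately have "e = (\<lambda>_. 0)"
    by blast
  with \<open>\<alpha> \<in> I\<close> show "d \<alpha> = 0"
    unfolding e_def by (metis (full_types))
qed

lemma independent_summands_lines:
  assumes "orthonormal U" "finite U"
  shows "independent_summands U (\<lambda>u. span {u})"
  unfolding independent_summands_def
proof (intro allI impI ballI)
  fix d w assume d: "(\<forall>u\<in>U. d u \<in> span {u}) \<and> (\<Sum>u\<in>U. d u) = 0" and w: "w \<in> U"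
  have coord: "d u = (d u \<bullet> u) *\<^sub>R u" if "u \<in> U" for u
    using d that orthonormal_inner[OF assms(1) that that] by (auto simp: span_singleton)
  have "d w \<bullet> w = (\<Sum>u\<in>U. (d u \<bullet> u) *\<^sub>R u) \<bullet> w"
    using inner_sum_orthonormal[OF assms w] by simp
  also have "\<dots> = 0"
    using d coord by (simp cong: sum.cong)
  finally show "d w = 0"
    using coord[OF w] by simp
qed

lemma independent_summands_reindex:
  assumes "inj_on g I" "independent_summands I (S \<circ> g)"
  shows "independent_summands (g ` I) S"
  unfolding independent_summands_def
proof (intro allI impI)
  fix d assume d: "(\<forall>\<beta>\<in>g ` I. d \<beta> \<in> S \<beta>) \<and> (\<Sum>\<beta>\<in>g ` I. d \<beta>) = 0"
  from assms(2) have "(\<forall>\<beta>\<in>I. (d \<circ> g) \<beta> \<in> (S \<circ> g) \<beta>) \<and> (\<Sum>\<beta>\<in>I. (d \<circ> g) \<beta>) = 0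
      \<longrightarrow> (\<forall>\<beta>\<in>I. (d \<circ> g) \<beta> = 0)"
    unfolding independent_summands_def by blast
  then have "\<forall>\<beta>\<in>I. (d \<circ> g) \<beta> = 0"
    using d by (simp add: sum.reindex[OF assms(1)])
  then show "\<forall>\<beta>\<in>g ` I. d \<beta> = 0"
    by simp
qed

lemma independent_summands_Un:
  assumes "independent_summands I S" "independent_summands I' S"
    and "finite I" "finite I'" "I \<inter> I' = {}"
    and "subspace A" "subspace B" "A \<inter> B \<subseteq> {0}"
    and "\<And>\<beta>. \<beta> \<in> I \<Longrightarrow> S \<beta> \<subseteq> A" "\<And>\<beta>. \<beta> \<in> I' \<Longrightarrow> S \<beta> \<subseteq> B"
  shows "independent_summands (I \<union> I') S"
  unfolding independent_summands_def
proof (intro allI impI)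
  fix d assume d: "(\<forall>\<beta>\<in>I \<union> I'. d \<beta> \<in> S \<beta>) \<and> (\<Sum>\<beta>\<in>I \<union> I'. d \<beta>) = 0"
  let ?a = "\<Sum>\<beta>\<in>I. d \<beta>" and ?b = "\<Sum>\<beta>\<in>I'. d \<beta>"
  have "?a \<in> A"
    using d assms(6,9) by (intro subspace_sum) blast+
  moreover have "?b \<in> B"
    using d assms(7,10) by (intro subspace_sum) blast+
  moreover have "?a = - ?b"
    using d assms(3-5) by (simp add: sum.union_disjoint eq_neg_iff_add_eq_0)
  ultimately have "?a = 0" "?b = 0"
    using assms(7,8) subspace_neg by fastforce+
  then show "\<forall>\<beta>\<in>I \<union> I'. d \<beta> = 0"
    using d assms(1,2) unfolding independent_summands_def by blast
qed

lemma proj_along_eqI: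
  assumes "independent_summands I S" "\<And>\<beta>. \<beta> \<in> I \<Longrightarrow> subspace (S \<beta>)"
    and "\<And>\<beta>. \<beta> \<in> I \<Longrightarrow> f \<beta> \<in> S \<beta>" "\<And>\<beta>. \<beta> \<notin> I \<Longrightarrow> f \<beta> = 0"
  shows "proj_along I S \<alpha> (\<Sum>\<beta>\<in>I. f \<beta>) = f \<alpha>"
  unfolding proj_along_def
proof (rule the_equality)
  fix y assume "\<exists>g. (\<forall>\<beta>\<in>I. g \<beta> \<in> S \<beta>) \<and> (\<forall>\<beta>. \<beta> \<notin> I \<longrightarrow> g \<beta> = 0)
      \<and> (\<Sum>\<beta>\<in>I. f \<beta>) = (\<Sum>\<beta>\<in>I. g \<beta>) \<and> y = g \<alpha>"
  then obtain g where g: "\<forall>\<beta>\<in>I. g \<beta> \<in> S \<beta>" "\<forall>\<beta>. \<beta> \<notin> I \<longrightarrow> g \<beta> = 0"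
    "(\<Sum>\<beta>\<in>I. f \<beta>) = (\<Sum>\<beta>\<in>I. g \<beta>)" "y = g \<alpha>"
    by blast
  have "\<forall>\<beta>\<in>I. g \<beta> - f \<beta> = 0"
    using assms(1) unfolding independent_summands_def
  proof (rule spec[of _ "\<lambda>\<beta>. g \<beta> - f \<beta>", THEN mp], intro conjI ballI)
    show "g \<beta> - f \<beta> \<in> S \<beta>" if "\<beta> \<in> I" for \<beta>
      using g(1) assms(2,3) that by (simp add: subspace_diff)
    show "(\<Sum>\<beta>\<in>I. g \<beta> - f \<beta>) = 0"
      using g(3) by (simp add: sum_subtractf)
  qed
  then show "y = f \<alpha>"
    using g(2,4) assms(4) by (cases "\<alpha> \<in> I") auto
qed (use assms in auto)

lemma sum_proj_along:
  assumes "independent_summands M S" "\<And>\<beta>. \<beta> \<in> M \<Longrightarrow> subspace (S \<beta>)"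
    and "\<And>\<beta>. \<beta> \<in> M \<Longrightarrow> f \<beta> \<in> S \<beta>" "I \<subseteq> M"
  shows "(\<Sum>\<alpha>\<in>I. proj_along M S \<alpha> (\<Sum>\<beta>\<in>M. f \<beta>)) = (\<Sum>\<alpha>\<in>I. f \<alpha>)"
proof -
  let ?f = "\<lambda>\<beta>. if \<beta> \<in> M then f \<beta> else 0"
  have "proj_along M S \<alpha> (\<Sum>\<beta>\<in>M. ?f \<beta>) = ?f \<alpha>" for \<alpha>
    using assms(1-3) by (intro proj_along_eqI) auto
  then show ?thesis
    using assms(4) by (auto intro!: sum.cong)
qed

lemma
  assumes "deformation_retract C dC D dD Phi Psi h"
  shows retract_chain_complex: "chain_complex C dC" "chain_complex D dD"
    and retract_Phi: "lin_on (D m) (Phi m)" "y \<in> D m \<Longrightarrow> Phi m y \<in> C m"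
      "y \<in> D m \<Longrightarrow> dC m (Phi m y) = Phi (m - 1) (dD m y)"
    and retract_Psi: "lin_on (C m) (Psi m)" "x \<in> C m \<Longrightarrow> Psi m x \<in> D m"
      "x \<in> C m \<Longrightarrow> dD m (Psi m x) = Psi (m - 1) (dC m x)"
    and retract_h: "lin_on (C m) (h m)" "x \<in> C m \<Longrightarrow> h m x \<in> C (m + 1)"
    and retract_Psi_Phi: "y \<in> D m \<Longrightarrow> Psi m (Phi m y) = y"
    and retract_homotopy: "x \<in> C m \<Longrightarrow> dC (m + 1) (h m x) + h (m - 1) (dC m x) = x - Phi m (Psi m x)"
  using assms unfolding deformation_retract_def chain_map_def by blast+

lemma diff_Phi_Psi_mem_kerPsi:
  assumes "deformation_retract C dC D dD Phi Psi h" "x \<in> C m"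
  shows "x - Phi m (Psi m x) \<in> kerPsi C Psi m"
proof -
  have "Phi m (Psi m x) \<in> C m"
    using assms by (simp add: retract_Phi retract_Psi)
  moreover have "subspace (C m)"
    using chain_complex_subspace[OF retract_chain_complex(1)[OF assms(1)]] .
  ultimately show ?thesis
    using assms lin_on_diff[OF _ retract_Psi(1)[OF assms(1)]]
    by (simp add: kerPsi_def subspace_diff retract_Psi retract_Psi_Phi)
qed

lemma kerPsi_inter_image_Phi:
  assumes "deformation_retract C dC D dD Phi Psi h"
  shows "kerPsi C Psi m \<inter> Phi m ` D m \<subseteq> {0}"
proof
  fix x assume "x \<in> kerPsi C Psi m \<inter> Phi m ` D m"
  then obtain y where y: "y \<in> D m" "x = Phi m y" "Psi m x = 0"
    unfolding kerPsi_def by blast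
  then have "y = 0"
    using retract_Psi_Phi[OF assms] by simp
  moreover have "Phi m 0 = 0"
    using lin_on_zero[OF chain_complex_subspace[OF retract_chain_complex(2)[OF assms]] retract_Phi(1)[OF assms]] .
  ultimately show "x \<in> {0}"
    using y(2) by simp
qed

lemma chain_complex_kerPsi:
  assumes "deformation_retract C dC D dD Phi Psi h"
  shows "chain_complex (kerPsi C Psi) dC"
  unfolding chain_complex_def
proof (intro allI conjI)
  fix m
  note C = retract_chain_complex(1)[OF assms]
  have K: "subspace (kerPsi C Psi m)"
    unfolding kerPsi_def using chain_complex_subspace[OF C] retract_Psi(1)[OF assms]
    by (rule subspace_kernel_lin_on)
  then show "fin_dim_subspace (kerPsi C Psi m)"
    by (rule fin_dim_subspace_subset[OF chain_complex_fin_dim[OF C]]) (auto simp: kerPsi_def)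
  show "lin_on (kerPsi C Psi m) (dC m)"
    by (rule lin_on_subset[OF chain_complex_lin_on[OF C]]) (auto simp: kerPsi_def)
  show "dC m ` kerPsi C Psi m \<subseteq> kerPsi C Psi (m - 1)"
  proof
    fix y assume "y \<in> dC m ` kerPsi C Psi m"
    then obtain x where x: "x \<in> C m" "Psi m x = 0" "y = dC m x"
      unfolding kerPsi_def by blast
    have "Psi (m - 1) y = dD m 0"
      using retract_Psi(3)[OF assms x(1)] x(2,3) by simp
    also have "\<dots> = 0"
      using retract_chain_complex(2)[OF assms] chain_complex_subspace chain_complex_lin_on lin_on_zero
      by metis
    finally show "y \<in> kerPsi C Psi (m - 1)"
      using x C chain_complex_mem[of C dC x "m - 1"] by (simp add: kerPsi_def)
  qed
  show "\<forall>x\<in>kerPsi C Psi m. dC (m - 1) (dC m x) = 0"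
    using C chain_complex_d_d[of C dC _ "m - 1"] by (simp add: kerPsi_def)
qed

lemma acyclic_kerPsi:
  assumes "deformation_retract C dC D dD Phi Psi h"
  shows "acyclic_complex (kerPsi C Psi) dC"
  unfolding acyclic_complex_def
proof (intro allI ballI impI)
  fix m z assume "z \<in> kerPsi C Psi m" and cycle: "dC m z = 0"
  then have z: "z \<in> C m" "Psi m z = 0"
    unfolding kerPsi_def by auto
  note C = retract_chain_complex(1)[OF assms]
  have zeros: "h (m - 1) 0 = 0" "Phi m 0 = 0"
    using lin_on_zero[OF chain_complex_subspace[OF C] retract_h(1)[OF assms]]
      lin_on_zero[OF chain_complex_subspace[OF retract_chain_complex(2)[OF assms]] retract_Phi(1)[OF assms]]
    by blast+
  define a where "a = h m z"
  have a: "a \<in> C (m + 1)"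
    unfolding a_def using retract_h(2)[OF assms z(1)] .
  have da: "dC (m + 1) a = z"
    using retract_homotopy[OF assms z(1)] cycle z(2) zeros unfolding a_def by simp
  have Psi_a: "Psi (m + 1) a \<in> D (m + 1)"
    using retract_Psi(2)[OF assms a] .
  have "dC (m + 1) (a - Phi (m + 1) (Psi (m + 1) a))
      = dC (m + 1) a - dC (m + 1) (Phi (m + 1) (Psi (m + 1) a))"
    using lin_on_diff[OF chain_complex_subspace[OF C] chain_complex_lin_on[OF C] a]
      retract_Phi(2)[OF assms Psi_a] by blast
  also have "\<dots> = z - Phi m (Psi m z)"
    using retract_Phi(3)[OF assms Psi_a] retract_Psi(3)[OF assms a] da by simp
  also have "\<dots> = z"
    using z(2) zeros by simp
  finally show "\<exists>w\<in>kerPsi C Psi (m + 1). dC (m + 1) w = z"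
    using diff_Phi_Psi_mem_kerPsi[OF assms a] by blast
qed

lemma sum_mcells:
  assumes "finite U" "finite J"
  shows "(\<Sum>\<beta>\<in>Vec ` U \<union> Smd ` J. f \<beta>) = (\<Sum>u\<in>U. f (Vec u)) + (\<Sum>j\<in>J. f (Smd j))"
  using assms by (subst sum.union_disjoint) (auto simp: sum.reindex inj_on_def)

lemma morse_cells_diff_critical_cells:
  fixes n :: int
  assumes "match (n + 1) ` R (n + 1) = L (n + 1)"
  shows "morse_cells R L H J n - critical_cells R L H J match n = Vec ` (R n \<union> L (n + 1))"
proof -
  have "\<exists>e\<in>morse_matching R match. fst e = (n, \<alpha>) \<or> snd e = (n, \<alpha>)"
    if cell: "\<alpha> \<in> Vec ` (R n \<union> L (n + 1))" for \<alpha>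
  proof -
    obtain v where \<alpha>: "\<alpha> = Vec v" and v: "v \<in> R n \<or> v \<in> L (n + 1)"
      using cell by blast
    from v show ?thesis
    proof
      assume "v \<in> R n"
      then have "((n, Vec v), (n - 1, Vec (match n v))) \<in> morse_matching R match"
        unfolding morse_matching_def by blast
      then show ?thesis
        using \<alpha> by force
    next
      assume "v \<in> L (n + 1)"
      then obtain v' where "v' \<in> R (n + 1)" "v = match (n + 1) v'"
        using assms by blast
      then have "((n + 1, Vec v'), (n + 1 - 1, Vec v)) \<in> morse_matching R match"
        unfolding morse_matching_def by blast
      then show ?thesis
        using \<alpha> by (intro bexI[of _ "((n + 1, Vec v'), (n + 1 - 1, Vec v))"]) simp_all
    qed
  qed
  moreover have "\<alpha> \<in> Vec ` (R n \<union> L (n + 1))"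
    if edge: "e \<in> morse_matching R match" "fst e = (n, \<alpha>) \<or> snd e = (n, \<alpha>)" for e \<alpha>
  proof -
    obtain m v where e: "e = ((m, Vec v), (m - 1, Vec (match m v)))" "v \<in> R m"
      using edge(1) unfolding morse_matching_def by blast
    show ?thesis
      using edge(2) e(2) assms unfolding e(1) by auto
  qed
  ultimately show ?thesis
    unfolding critical_cells_def morse_cells_def by blast
qed

lemma subspace_morse_summand:
  assumes "direct_sum_decomp J (P n) W" "\<beta> \<in> Vec ` U \<union> Smd ` J"
  shows "subspace (morse_summand P n \<beta>)"
  using assms unfolding direct_sum_decomp_def by auto

lemma independent_morse_summands:
  assumes "orthonormal U" "finite U" "U \<subseteq> A" "subspace A"
    and "direct_sum_decomp J (P n) W" "subspace W" "A \<inter> W \<subseteq> {0}"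
  shows "independent_summands (Vec ` U \<union> Smd ` J) (morse_summand P n)"
proof (rule independent_summands_Un)
  show "independent_summands (Vec ` U) (morse_summand P n)"
    using independent_summands_lines[OF assms(1,2)]
    by (intro independent_summands_reindex) (simp_all add: comp_def inj_on_def)
  show "independent_summands (Smd ` J) (morse_summand P n)"
    using independent_summands_if_direct_sum_decomp[OF assms(5,6)]
    by (intro independent_summands_reindex) (simp_all add: comp_def inj_on_def)
  show "morse_summand P n \<beta> \<subseteq> A" if \<beta>: "\<beta> \<in> Vec ` U" for \<beta>
  proof -
    obtain u where "u \<in> A" "\<beta> = Vec u"
      using \<beta> assms(3) by blast
    then show ?thesis
      using assms(4) by (simp add: span_minimal)
  qed
  show "morse_summand P n \<beta> \<subseteq> W" if \<beta>: "\<beta> \<in> Smd ` J" for \<beta>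
  proof -
    obtain j where "j \<in> J" "\<beta> = Smd j"
      using \<beta> by blast
    with assms(5) show ?thesis
      unfolding direct_sum_decomp_def by simp
  qed
qed (use assms in \<open>auto simp: direct_sum_decomp_def\<close>)

lemma sum_proj_along_Vec:
  assumes "orthonormal U" "finite U" "span U = A"
    and P: "direct_sum_decomp J (P n) W" "subspace W" "A \<inter> W \<subseteq> {0}"
    and "k \<in> A" "y \<in> W"
  shows "(\<Sum>\<alpha>\<in>Vec ` U. proj_along (Vec ` U \<union> Smd ` J) (morse_summand P n) \<alpha> (k + y)) = k"
proof -
  have independent: "independent_summands (Vec ` U \<union> Smd ` J) (morse_summand P n)"
    using assms(1,2) span_superset subspace_span P unfolding assms(3)[symmetric]
    by (rule independent_morse_summands)
  obtain g where g: "\<forall>j\<in>J. g j \<in> P n j" "y = (\<Sum>j\<in>J. g j)"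
    using P(1) assms(8) unfolding direct_sum_decomp_def by blast
  define f where "f = case_mcell (\<lambda>u. (k \<bullet> u) *\<^sub>R u) g"
  have k: "(\<Sum>u\<in>U. (k \<bullet> u) *\<^sub>R u) = k"
    using orthonormal_expansion[OF assms(1,2)] assms(3,7) by simp
  have "finite J"
    using P(1) unfolding direct_sum_decomp_def by blast
  then have "k + y = (\<Sum>\<beta>\<in>Vec ` U \<union> Smd ` J. f \<beta>)"
    unfolding f_def using assms(2) k g(2) by (simp add: sum_mcells)
  moreover have "f \<beta> \<in> morse_summand P n \<beta>" if "\<beta> \<in> Vec ` U \<union> Smd ` J" for \<beta>
    using that g(1) unfolding f_def by (auto simp: span_mul span_base)
  ultimately have "(\<Sum>\<alpha>\<in>Vec ` U. proj_along (Vec ` U \<union> Smd ` J) (morse_summand P n) \<alpha> (k + y))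
      = (\<Sum>\<alpha>\<in>Vec ` U. f \<alpha>)"
    using sum_proj_along[OF independent subspace_morse_summand[of J P n, OF P(1)]] by simp
  also have "\<dots> = k"
    using k unfolding f_def by (simp add: sum.reindex inj_on_def)
  finally show ?thesis .
qed

theorem mainTheorem7:
  fixes C :: "int \<Rightarrow> 'v::real_inner set" and dC :: "int \<Rightarrow> 'v \<Rightarrow> 'v"
    and D :: "int \<Rightarrow> 'w::real_inner set" and dD :: "int \<Rightarrow> 'w \<Rightarrow> 'w"
    and Phi :: "int \<Rightarrow> 'w \<Rightarrow> 'v" and Psi :: "int \<Rightarrow> 'v \<Rightarrow> 'w" and h :: "int \<Rightarrow> 'v \<Rightarrow> 'v"
    and R L H :: "int \<Rightarrow> 'v set" and match :: "int \<Rightarrow> 'v \<Rightarrow> 'v"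
    and J :: "int \<Rightarrow> 'i set" and P :: "int \<Rightarrow> 'i \<Rightarrow> 'v set"
  assumes "deformation_retract C dC D dD Phi Psi h"
    and "is_morsification C dC D Phi Psi R L match H J P"
    and "x \<in> C n"
  shows "x - Phi n (Psi n x) =
    (\<Sum>\<alpha>\<in>morse_cells R L H J n - critical_cells R L H J match n.
        proj_along (morse_cells R L H J n) (morse_summand P n) \<alpha> x)"
proof -
  let ?K = "kerPsi C Psi" and ?U = "R n \<union> L (n + 1)"
  have R: "orthonormal_basis_of (R n) (dagger (?K n) (dC n) ` ?K (n - 1))"
    and L: "orthonormal_basis_of (L (n + 1)) (dC (n + 1) ` ?K (n + 1))"
    and match: "match (n + 1) ` R (n + 1) = L (n + 1)"
    and H: "basis_of (H n) (harmonic_space ?K dC n)"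
    and P: "direct_sum_decomp (J n) (P n) (Phi n ` D n)"
    using assms(2) unfolding is_morsification_def Let_def bij_betw_def by blast+
  note K = chain_complex_kerPsi[OF assms(1)] acyclic_kerPsi[OF assms(1)]
  note U = orthonormal_hodge_basis[OF K(1) R L] span_hodge_basis[OF K R L]
  have "H n = {}"
    using H harmonic_space_acyclic[OF K] dependent_zero unfolding basis_of_def by blast
  then have cells: "morse_cells R L H J n = Vec ` ?U \<union> Smd ` J n"
    unfolding morse_cells_def by simp
  have W: "subspace (Phi n ` D n)"
    using retract_chain_complex(2)[OF assms(1)] retract_Phi(1)[OF assms(1)]
    by (intro subspace_image_lin_on chain_complex_subspace)
  have "Phi n (Psi n x) \<in> Phi n ` D n"
    using retract_Psi(2)[OF assms(1,3)] by blast
  from sum_proj_along_Vec[where P = P and n = n, OF U(1,3,4) P W kerPsi_inter_image_Phi[OF assms(1)]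
      diff_Phi_Psi_mem_kerPsi[OF assms(1,3)] this]
  have "(\<Sum>\<alpha>\<in>Vec ` ?U. proj_along (Vec ` ?U \<union> Smd ` J n) (morse_summand P n) \<alpha> x)
      = x - Phi n (Psi n x)"
    by simp
  then show ?thesis
    using morse_cells_diff_critical_cells[of match n R L H J, OF match] unfolding cells by simp
qed

end
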